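(* Let $k\in\mathbb{N}$ and $n=3k+1$. Then $D_{\mathrm{lin}}(\mathrm{MINCUT}_n)\ge 2n-2$; that is, any deterministic linear query algorithm that correctly computes the minimum cut weight of every $n$-vertex weighted undirected graph must make at least $2n-2$ linear queries in the worst case.
   Context: An $n$-vertex weighted undirected graph $G=(V,w)$ is given by a vector $w\in\mathbb{R}_{\ge 0}^{\binom{n}{2}}$ assigning a nonnegative weight to each unordered pair of distinct vertices; for $\emptyset\ne X\subsetneq V$ the cut $\Delta(X)$ has weight equal to the sum of $w$ over pairs with exactly one endpoint in $X$. In $\mathrm{MINCUT}_n$ the input is such a graph and the required output is the minimum weight of a cut. A linear query is a vector $x\in\mathbb{R}^{\binom n2}$ and is answered by $\langle x,w\rangle$; queries may be chosen adaptively. $D_{\mathrm{lin}}(\mathrm{MINCUT}_n)$ is the minimum, over deterministic linear query algorithms that output the correct answer on every $n$-vertex weighted graph, of the maximum over inputs of the number of queries made. *)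

theory Defs
  imports Complex_Main
begin

text \<open>Vertices of an n-vertex graph are 0,...,n-1. Unordered pairs {i,j} of distinct
vertices are represented by ordered pairs (i,j) with i < j < n.\<close>

definition Pairs :: "nat \<Rightarrow> (nat \<times> nat) set" where
  "Pairs n = {(i, j). i < j \<and> j < n}"

text \<open>A weighted n-vertex graph: a nonnegative weight on each pair (zero off the pairs,
so that the weight vector is exactly an element of R^(n choose 2)).\<close>

definition wgraph :: "nat \<Rightarrow> (nat \<times> nat \<Rightarrow> real) \<Rightarrow> bool" where
  "wgraph n w \<longleftrightarrow> (\<forall>p \<in> Pairs n. 0 \<le> w p) \<and> (\<forall>p. p \<notin> Pairs n \<longrightarrow> w p = 0)"

definition cut_weight :: "nat \<Rightarrow> (nat \<times> nat \<Rightarrow> real) \<Rightarrow> nat set \<Rightarrow> real" where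
  "cut_weight n w X = (\<Sum>p \<in> Pairs n. if (fst p \<in> X) \<noteq> (snd p \<in> X) then w p else 0)"

definition mincut :: "nat \<Rightarrow> (nat \<times> nat \<Rightarrow> real) \<Rightarrow> real" where
  "mincut n w = Min {cut_weight n w X | X. X \<noteq> {} \<and> X \<subset> {..<n}}"

definition lin_query :: "nat \<Rightarrow> (nat \<times> nat \<Rightarrow> real) \<Rightarrow> (nat \<times> nat \<Rightarrow> real) \<Rightarrow> real" where
  "lin_query n x w = (\<Sum>p \<in> Pairs n. x p * w p)"

text \<open>Deterministic adaptive linear query algorithms = decision trees: either output a
value, or ask a linear query and continue depending on the answer.\<close>

datatype qtree = Out real | Ask "nat \<times> nat \<Rightarrow> real" "real \<Rightarrow> qtree"

primrec run :: "nat \<Rightarrow> qtree \<Rightarrow> (nat \<times> nat \<Rightarrow> real) \<Rightarrow> real" where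
  "run n (Out r) w = r"
| "run n (Ask x f) w = run n (f (lin_query n x w)) w"

primrec num_queries :: "nat \<Rightarrow> qtree \<Rightarrow> (nat \<times> nat \<Rightarrow> real) \<Rightarrow> nat" where
  "num_queries n (Out r) w = 0"
| "num_queries n (Ask x f) w = Suc (num_queries n (f (lin_query n x w)) w)"

end

theory Submission
  imports Defs "HOL-Library.Function_Algebras"
begin

text \<open>The hard input is the windmill: k copies of K4 sharing the vertex 0, with unit weights,
whose minimum cut is 3. Fewer than 6k = 2n - 2 queries on it leave a direction d on the 6k
windmill edges that all of them annihilate; scaled so that max |d| = 1 is attained, both
windmill \<plusminus> d are legal inputs that the algorithm cannot tell from the windmill, so they too
have minimum cut 3. Within one blade, the cuts separating leaves from the hub have weight 3
(one or all three leaves) or 4 (two leaves): under \<plusminus>d the former cannot change at all and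
the latter by at most 1, and these seven constraints bound every coordinate of d on the
blade by 1/2.\<close>

section \<open>Underdetermined homogeneous linear systems\<close>

lemma sum_fun_apply: "(\<Sum>i\<in>A. f i) x = (\<Sum>i\<in>A. f i x)"
  by (induction A rule: infinite_finite_induct) auto

context
begin

interpretation fun_vector: vector_space "\<lambda>(c::real) (f::'a \<Rightarrow> real) x. c * f x"
  by unfold_locales (auto simp: algebra_simps)

text \<open>The columns of the constraint matrix are |S| vectors in an m-dimensional space,
hence either two of them coincide or they are linearly dependent.\<close>

lemma exists_nonzero_orthogonal:
  fixes xs :: "('a \<Rightarrow> real) list"
  assumes "finite S" and "length xs < card S"
  shows "\<exists>d. (\<forall>p. p \<notin> S \<longrightarrow> d p = 0) \<and> (\<exists>p\<in>S. d p \<noteq> 0) \<and>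
    (\<forall>x\<in>set xs. (\<Sum>p\<in>S. x p * d p) = 0)"
proof -
  define col :: "'a \<Rightarrow> nat \<Rightarrow> real"
    where "col p = (\<lambda>j. if j < length xs then (xs ! j) p else 0)" for p
  define e :: "nat \<Rightarrow> nat \<Rightarrow> real" where "e j = (\<lambda>i. if i = j then 1 else 0)" for j
  have col_span: "col ` S \<subseteq> fun_vector.span (e ` {..<length xs})"
  proof
    fix v assume "v \<in> col ` S"
    then obtain p where v: "v = col p" by blast
    have "v = (\<Sum>j<length xs. (\<lambda>i. (xs ! j) p * e j i))"
      unfolding v col_def e_def by (auto simp: fun_eq_iff sum_fun_apply if_distrib cong: if_cong)
    moreover have "(\<lambda>i. (xs ! j) p * e j i) \<in> fun_vector.span (e ` {..<length xs})"
      if "j < length xs" for j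
      using fun_vector.span_scale[OF fun_vector.span_base, of "e j"] that by auto
    ultimately show "v \<in> fun_vector.span (e ` {..<length xs})"
      by (auto intro!: fun_vector.span_sum)
  qed
  show ?thesis
  proof (cases "inj_on col S")
    case False
    then obtain p q where pq: "p \<in> S" "q \<in> S" "p \<noteq> q" "col p = col q"
      by (auto simp: inj_on_def)
    have "x p = x q" if "x \<in> set xs" for x
      using that fun_cong[OF pq(4)] unfolding in_set_conv_nth col_def by (metis (full_types))
    moreover have "(\<Sum>r\<in>S. x r * (of_bool (r = p) - of_bool (r = q))) = x p - x q"
      for x :: "'a \<Rightarrow> real"
      using pq(1,2) assms(1) by (simp add: right_diff_distrib sum_subtractf)
    ultimately show ?thesis using pq
      by (intro exI[of _ "\<lambda>r. of_bool (r = p) - of_bool (r = q)"]) auto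
  next
    case True
    have "fun_vector.dependent (col ` S)"
    proof (rule ccontr)
      assume "\<not> fun_vector.dependent (col ` S)"
      then have "card (col ` S) \<le> card (e ` {..<length xs})"
        using fun_vector.independent_span_bound[OF _ _ col_span] by blast
      also have "\<dots> \<le> length xs" using card_image_le by fastforce
      finally show False using assms(2) card_image[OF True] by simp
    qed
    then obtain u where u: "\<exists>v\<in>col ` S. u v \<noteq> 0" "(\<Sum>v\<in>col ` S. (\<lambda>i. u v * v i)) = 0"
      using fun_vector.dependent_finite[of "col ` S"] assms(1) by auto
    have "(\<Sum>p\<in>S. (xs ! j) p * u (col p)) = 0" if "j < length xs" for j
    proof -
      have "(\<Sum>v\<in>col ` S. (\<lambda>i. u v * v i)) j = (\<Sum>p\<in>S. u (col p) * col p j)"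
        by (simp add: sum_fun_apply sum.reindex[OF True])
      also have "\<dots> = (\<Sum>p\<in>S. (xs ! j) p * u (col p))"
        using that by (simp add: col_def mult.commute)
      finally show ?thesis using u(2) by simp
    qed
    then have "(\<Sum>p\<in>S. x p * u (col p)) = 0" if "x \<in> set xs" for x
      using that by (auto simp: in_set_conv_nth)
    then show ?thesis using u(1) assms(1)
      by (intro exI[of _ "\<lambda>p. if p \<in> S then u (col p) else 0"]) (auto simp: if_distrib sum.If_cases)
  qed
qed

end

lemma exists_normalized_orthogonal:
  fixes xs :: "('a \<Rightarrow> real) list"
  assumes "finite S" and "length xs < card S"
  shows "\<exists>d. (\<forall>p. p \<notin> S \<longrightarrow> d p = 0) \<and> (\<forall>p. \<bar>d p\<bar> \<le> 1) \<and> (\<exists>p\<in>S. d p = 1) \<and>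
    (\<forall>x\<in>set xs. (\<Sum>p\<in>S. x p * d p) = 0)"
proof -
  obtain d where d_supp: "\<forall>p. p \<notin> S \<longrightarrow> d p = 0" and d_nonzero: "\<exists>p\<in>S. d p \<noteq> 0"
    and d_orth: "\<forall>x\<in>set xs. (\<Sum>p\<in>S. x p * d p) = 0"
    using exists_nonzero_orthogonal[OF assms] by blast
  have "Max ((\<lambda>p. \<bar>d p\<bar>) ` S) \<in> (\<lambda>p. \<bar>d p\<bar>) ` S"
    using assms(1) d_nonzero by (intro Max_in) auto
  then obtain p0 where p0: "p0 \<in> S" "\<bar>d p0\<bar> = Max ((\<lambda>p. \<bar>d p\<bar>) ` S)" by auto
  have d_le: "\<bar>d p\<bar> \<le> \<bar>d p0\<bar>" for p
    using p0 assms(1) d_supp by (cases "p \<in> S") auto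
  then have "d p0 \<noteq> 0" using d_nonzero by force
  then show ?thesis
    using p0(1) d_supp d_orth d_le
    by (intro exI[of _ "\<lambda>p. d p / d p0"])
      (auto simp: divide_le_eq_1 sum_divide_distrib[symmetric])
qed

lemma finite_Pairs [simp]: "finite (Pairs n)"
  by (rule finite_subset[of _ "{..<n} \<times> {..<n}"]) (auto simp: Pairs_def)

lemma lin_query_add_scaled:
  "lin_query n x (\<lambda>p. w p + c * d p) = lin_query n x w + c * lin_query n x d"
  unfolding lin_query_def by (simp add: algebra_simps sum.distrib sum_distrib_left)

lemma lin_query_eq_sum_support:
  assumes "S \<subseteq> Pairs n" and "\<forall>p. p \<notin> S \<longrightarrow> d p = 0"
  shows "lin_query n x d = (\<Sum>p\<in>S. x p * d p)"
  unfolding lin_query_def by (rule sum.mono_neutral_right) (use assms in auto)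

primrec query_path ::
  "nat \<Rightarrow> qtree \<Rightarrow> (nat \<times> nat \<Rightarrow> real) \<Rightarrow> (nat \<times> nat \<Rightarrow> real) list" where
  "query_path n (Out r) w = []"
| "query_path n (Ask x f) w = x # query_path n (f (lin_query n x w)) w"

lemma length_query_path: "length (query_path n T w) = num_queries n T w"
  by (induction T) auto

lemma run_eq_if_same_answers:
  "\<forall>x\<in>set (query_path n T w). lin_query n x w' = lin_query n x w \<Longrightarrow> run n T w' = run n T w"
  by (induction T) auto

lemma mincut_eq_if_same_answers:
  assumes "\<forall>w. wgraph n w \<longrightarrow> run n T w = mincut n w"
    and "wgraph n w" and "wgraph n w'"
    and "\<forall>x\<in>set (query_path n T w). lin_query n x w' = lin_query n x w"
  shows "mincut n w' = mincut n w"
  using assms run_eq_if_same_answers[OF assms(4)] by simp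

lemma cut_weight_add_scaled:
  "cut_weight n (\<lambda>p. w p + c * d p) X = cut_weight n w X + c * cut_weight n d X"
  unfolding cut_weight_def sum_distrib_left sum.distrib[symmetric] by (intro sum.cong) auto

lemma finite_cut_weights: "finite {cut_weight n w X | X. X \<noteq> {} \<and> X \<subset> {..<n}}"
  by (rule finite_subset[of _ "cut_weight n w ` Pow {..<n}"]) blast+

lemma mincut_le_cut_weight: "X \<noteq> {} \<Longrightarrow> X \<subset> {..<n} \<Longrightarrow> mincut n w \<le> cut_weight n w X"
  unfolding mincut_def by (rule Min_le[OF finite_cut_weights]) blast

lemma le_mincut:
  assumes "2 \<le> n" and "\<And>X. X \<noteq> {} \<Longrightarrow> X \<subset> {..<n} \<Longrightarrow> c \<le> cut_weight n w X"
  shows "c \<le> mincut n w"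
proof -
  have "0 \<in> {..<n}" "1 \<in> {..<n}" "(1::nat) \<notin> {0}" using assms(1) by auto
  then have "{0} \<subset> {..<n}" by blast
  then have "cut_weight n w {0} \<in> {cut_weight n w X | X. X \<noteq> {} \<and> X \<subset> {..<n}}" by blast
  then have "{cut_weight n w X | X. X \<noteq> {} \<and> X \<subset> {..<n}} \<noteq> {}" by blast
  moreover have "\<forall>a\<in>{cut_weight n w X | X. X \<noteq> {} \<and> X \<subset> {..<n}}. c \<le> a"
    using assms(2) by blast
  ultimately show ?thesis
    unfolding mincut_def by (simp add: Min_ge_iff[OF finite_cut_weights])
qed

section \<open>The windmill graph\<close>

definition windmill_blade :: "nat \<Rightarrow> (nat \<times> nat) set" where
  "windmill_blade i = {(0, 3*i+1), (0, 3*i+2), (0, 3*i+3),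
     (3*i+1, 3*i+2), (3*i+1, 3*i+3), (3*i+2, 3*i+3)}"

definition windmill_edges :: "nat \<Rightarrow> (nat \<times> nat) set" where
  "windmill_edges k = (\<Union>i<k. windmill_blade i)"

definition windmill :: "nat \<Rightarrow> nat \<times> nat \<Rightarrow> real" where
  "windmill k p = of_bool (p \<in> windmill_edges k)"

definition blade_cut_weight :: "(nat \<times> nat \<Rightarrow> real) \<Rightarrow> nat set \<Rightarrow> nat \<Rightarrow> real" where
  "blade_cut_weight w X i = (\<Sum>p\<in>windmill_blade i. if (fst p \<in> X) \<noteq> (snd p \<in> X) then w p else 0)"

lemma sum_windmill_blade:
  "(\<Sum>p\<in>windmill_blade i. g p) = g (0, 3*i+1) + g (0, 3*i+2) + g (0, 3*i+3)
     + g (3*i+1, 3*i+2) + g (3*i+1, 3*i+3) + g (3*i+2, 3*i+3)"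
  by (simp add: windmill_blade_def algebra_simps)

lemma windmill_blades_disjoint: "i \<noteq> j \<Longrightarrow> windmill_blade i \<inter> windmill_blade j = {}"
  by (auto simp: windmill_blade_def)

lemma finite_windmill_blade [simp]: "finite (windmill_blade i)"
  by (simp add: windmill_blade_def)

lemma finite_windmill_edges [simp]: "finite (windmill_edges k)"
  by (simp add: windmill_edges_def)

lemma card_windmill_edges: "card (windmill_edges k) = 6 * k"
proof -
  have "card (windmill_edges k) = (\<Sum>i<k. card (windmill_blade i))"
    unfolding windmill_edges_def by (rule card_UN_disjoint) (auto simp: windmill_blades_disjoint)
  then show ?thesis by (simp add: windmill_blade_def)
qed

lemma windmill_edges_subset_Pairs: "3 * k < n \<Longrightarrow> windmill_edges k \<subseteq> Pairs n"
  by (auto simp: windmill_edges_def windmill_blade_def Pairs_def)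

lemma windmill_vertex_cases:
  fixes v k :: nat
  assumes "0 < v" and "v < 3 * k + 1"
  obtains i where "i < k" and "v \<in> {3*i+1, 3*i+2, 3*i+3}"
proof
  show "(v - 1) div 3 < k" using assms by simp
  have "v = 3*((v - 1) div 3)+1 \<or> v = 3*((v - 1) div 3)+2 \<or> v = 3*((v - 1) div 3)+3"
    using assms(1) by presburger
  then show "v \<in> {3*((v - 1) div 3)+1, 3*((v - 1) div 3)+2, 3*((v - 1) div 3)+3}" by blast
qed

lemma cut_weight_eq_sum_blade_cuts:
  assumes "3 * k < n" and "\<forall>p. p \<notin> windmill_edges k \<longrightarrow> w p = 0"
  shows "cut_weight n w X = (\<Sum>i<k. blade_cut_weight w X i)"
proof -
  let ?f = "\<lambda>p. if (fst p \<in> X) \<noteq> (snd p \<in> X) then w p else 0"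
  have "cut_weight n w X = (\<Sum>p\<in>windmill_edges k. ?f p)"
    unfolding cut_weight_def
    by (rule sum.mono_neutral_right[OF finite_Pairs windmill_edges_subset_Pairs[OF assms(1)]])
      (use assms(2) in auto)
  also have "\<dots> = (\<Sum>i<k. \<Sum>p\<in>windmill_blade i. ?f p)"
    unfolding windmill_edges_def
    by (rule sum.UNION_disjoint) (auto simp: windmill_blades_disjoint windmill_blade_def)
  finally show ?thesis by (simp add: blade_cut_weight_def)
qed

lemma cut_weight_of_blade_leaves:
  assumes "3 * k < n" and "\<forall>p. p \<notin> windmill_edges k \<longrightarrow> w p = 0" and "i < k"
    and "X \<subseteq> {3*i+1, 3*i+2, 3*i+3}"
  shows "cut_weight n w X = blade_cut_weight w X i"
proof -
  have "blade_cut_weight w X j = 0" if "j \<noteq> i" for j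
    using assms(4) that unfolding blade_cut_weight_def sum_windmill_blade by auto
  then show ?thesis
    using cut_weight_eq_sum_blade_cuts[OF assms(1,2)] assms(3)
    by (simp add: sum.remove[of "{..<k}" i])
qed

lemma blade_cut_weight_leaf_sets:
  "blade_cut_weight w {3*i+1} i = w (0, 3*i+1) + w (3*i+1, 3*i+2) + w (3*i+1, 3*i+3)"
  "blade_cut_weight w {3*i+2} i = w (0, 3*i+2) + w (3*i+1, 3*i+2) + w (3*i+2, 3*i+3)"
  "blade_cut_weight w {3*i+3} i = w (0, 3*i+3) + w (3*i+1, 3*i+3) + w (3*i+2, 3*i+3)"
  "blade_cut_weight w {3*i+1, 3*i+2, 3*i+3} i = w (0, 3*i+1) + w (0, 3*i+2) + w (0, 3*i+3)"
  "blade_cut_weight w {3*i+1, 3*i+2} i =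
     w (0, 3*i+1) + w (0, 3*i+2) + w (3*i+1, 3*i+3) + w (3*i+2, 3*i+3)"
  "blade_cut_weight w {3*i+1, 3*i+3} i =
     w (0, 3*i+1) + w (0, 3*i+3) + w (3*i+1, 3*i+2) + w (3*i+2, 3*i+3)"
  "blade_cut_weight w {3*i+2, 3*i+3} i =
     w (0, 3*i+2) + w (0, 3*i+3) + w (3*i+1, 3*i+2) + w (3*i+1, 3*i+3)"
  by (simp_all add: blade_cut_weight_def sum_windmill_blade)

lemma windmill_edge_weights:
  assumes "i < k"
  shows "windmill k (0, 3*i+1) = 1"
    and "windmill k (0, 3*i+2) = 1"
    and "windmill k (0, 3*i+3) = 1"
    and "windmill k (3*i+1, 3*i+2) = 1"
    and "windmill k (3*i+1, 3*i+3) = 1"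
    and "windmill k (3*i+2, 3*i+3) = 1"
  using assms by (auto simp: windmill_edges_def windmill_blade_def windmill_def)

definition splits_blade :: "nat set \<Rightarrow> nat \<Rightarrow> bool" where
  "splits_blade X i \<longleftrightarrow> (\<exists>v\<in>{3*i+1, 3*i+2, 3*i+3}. (v \<in> X) \<noteq> (0 \<in> X))"

lemma exists_splits_blade:
  assumes n: "n = 3 * k + 1" and X: "X \<noteq> {}" "X \<subset> {..<n}"
  shows "\<exists>i<k. splits_blade X i"
proof (rule ccontr)
  assume no_split: "\<not> ?thesis"
  have same_side: "v \<in> X \<longleftrightarrow> 0 \<in> X" if "v < n" for v
  proof (cases "v = 0")
    case False
    with that n obtain i where "i < k" and "v \<in> {3*i+1, 3*i+2, 3*i+3}"
      using windmill_vertex_cases[of v k] by auto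
    then show ?thesis using no_split unfolding splits_blade_def by blast
  qed simp
  obtain a b where "a \<in> X" "b < n" "b \<notin> X" using X by blast
  moreover have "a < n" using \<open>a \<in> X\<close> X by blast
  ultimately show False using same_side by blast
qed

lemma blade_cut_weight_windmill_ge_3:
  assumes "i < k" and "splits_blade X i"
  shows "3 \<le> blade_cut_weight (windmill k) X i"
  using assms(2) unfolding splits_blade_def blade_cut_weight_def sum_windmill_blade
    windmill_edge_weights[OF assms(1)]
  by (cases "0 \<in> X"; cases "3*i+1 \<in> X"; cases "3*i+2 \<in> X"; cases "3*i+3 \<in> X") auto

lemma cut_weight_windmill_ge_3:
  assumes n: "n = 3 * k + 1" and X: "X \<noteq> {}" "X \<subset> {..<n}"
  shows "3 \<le> cut_weight n (windmill k) X"
proof -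
  obtain i where i: "i < k" and split: "splits_blade X i"
    using exists_splits_blade[OF assms] by blast
  have "3 \<le> blade_cut_weight (windmill k) X i"
    by (rule blade_cut_weight_windmill_ge_3[OF i split])
  also have "\<dots> \<le> (\<Sum>j<k. blade_cut_weight (windmill k) X j)"
    using i by (intro member_le_sum) (auto simp: blade_cut_weight_def windmill_def intro!: sum_nonneg)
  also have "\<dots> = cut_weight n (windmill k) X"
    using cut_weight_eq_sum_blade_cuts[of k n "windmill k" X] n by (simp add: windmill_def)
  finally show ?thesis .
qed

lemma mincut_windmill_ge_3:
  assumes "n = 3 * k + 1" and "0 < k"
  shows "3 \<le> mincut n (windmill k)"
  using assms by (intro le_mincut cut_weight_windmill_ge_3) auto

lemma wgraph_windmill_perturbed:
  assumes "3 * k < n" and "\<forall>p. p \<notin> windmill_edges k \<longrightarrow> d p = 0"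
    and "\<forall>p. \<bar>d p\<bar> \<le> 1" and "\<bar>c\<bar> \<le> 1"
  shows "wgraph n (\<lambda>p. windmill k p + c * d p)"
proof -
  have small: "\<bar>c * d p\<bar> \<le> 1" for p
    unfolding abs_mult using assms(4) by (intro mult_le_one) (simp_all add: assms(3))
  have "0 \<le> 1 + c * d p" for p
    using small[of p] by linarith
  then show ?thesis
    using assms(2) windmill_edges_subset_Pairs[OF assms(1)]
    unfolding wgraph_def windmill_def by auto
qed

lemma wgraph_windmill: "3 * k < n \<Longrightarrow> wgraph n (windmill k)"
  using wgraph_windmill_perturbed[of k n "\<lambda>_. 0" 0] by simp

lemma K4_perturbation_le_half:
  fixes h1 h2 h3 l12 l13 l23 :: real
  assumes "h1 + l12 + l13 = 0" "h2 + l12 + l23 = 0" "h3 + l13 + l23 = 0" "h1 + h2 + h3 = 0"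
    and "\<bar>h1 + h2 + l13 + l23\<bar> \<le> 1" "\<bar>h1 + h3 + l12 + l23\<bar> \<le> 1" "\<bar>h2 + h3 + l12 + l13\<bar> \<le> 1"
  shows "\<bar>h1\<bar> \<le> 1/2" "\<bar>h2\<bar> \<le> 1/2" "\<bar>h3\<bar> \<le> 1/2"
    and "\<bar>l12\<bar> \<le> 1/2" "\<bar>l13\<bar> \<le> 1/2" "\<bar>l23\<bar> \<le> 1/2"
proof -
  have opposite: "l23 = h1" "l13 = h2" "l12 = h3"
    using assms(1-4) by linarith+
  then have "h1 + h2 + l13 + l23 = -2 * h3" "h1 + h3 + l12 + l23 = -2 * h2"
    "h2 + h3 + l12 + l13 = -2 * h1"
    using assms(4) by linarith+
  then show "\<bar>h1\<bar> \<le> 1/2" "\<bar>h2\<bar> \<le> 1/2" "\<bar>h3\<bar> \<le> 1/2"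
    using assms(5-7) by (simp_all add: abs_mult)
  then show "\<bar>l12\<bar> \<le> 1/2" "\<bar>l13\<bar> \<le> 1/2" "\<bar>l23\<bar> \<le> 1/2"
    using opposite by simp_all
qed

lemma windmill_perturbation_le_half:
  assumes "3 * k < n" and "i < k" and d_supp: "\<forall>p. p \<notin> windmill_edges k \<longrightarrow> d p = 0"
    and cuts: "\<And>c X. c \<in> {1, -1} \<Longrightarrow> X \<noteq> {} \<Longrightarrow> X \<subset> {..<n} \<Longrightarrow>
      3 \<le> cut_weight n (\<lambda>p. windmill k p + c * d p) X"
    and "p \<in> windmill_blade i"
  shows "\<bar>d p\<bar> \<le> 1/2"
proof -
  let ?u = "3*i+1" and ?v = "3*i+2" and ?w = "3*i+3"
  have leaf_bound: "\<bar>blade_cut_weight d X i\<bar> \<le> blade_cut_weight (windmill k) X i - 3"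
    if X: "X \<subseteq> {?u, ?v, ?w}" "X \<noteq> {}" for X
  proof -
    have "X \<subseteq> {..<n}" "0 \<in> {..<n}" "0 \<notin> X" using X assms(1,2) by auto
    then have "X \<subset> {..<n}" by blast
    then have "3 \<le> cut_weight n (windmill k) X + c * cut_weight n d X" if "c \<in> {1, -1}" for c
      using cuts[OF that X(2)] by (simp add: cut_weight_add_scaled)
    moreover have "cut_weight n w' X = blade_cut_weight w' X i"
      if "\<forall>p. p \<notin> windmill_edges k \<longrightarrow> w' p = 0" for w'
      using cut_weight_of_blade_leaves[OF assms(1) that assms(2) X(1)] .
    ultimately show ?thesis
      using d_supp by (fastforce simp: windmill_def abs_le_iff)
  qed
  note cut_values = blade_cut_weight_leaf_sets windmill_edge_weights[OF assms(2)]
  have zero_sums: "d (0, ?u) + d (?u, ?v) + d (?u, ?w) = 0" "d (0, ?v) + d (?u, ?v) + d (?v, ?w) = 0"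
    "d (0, ?w) + d (?u, ?w) + d (?v, ?w) = 0" "d (0, ?u) + d (0, ?v) + d (0, ?w) = 0"
    using leaf_bound[of "{?u}"] leaf_bound[of "{?v}"] leaf_bound[of "{?w}"]
      leaf_bound[of "{?u, ?v, ?w}"]
    unfolding cut_values by simp_all
  have small_sums: "\<bar>d (0, ?u) + d (0, ?v) + d (?u, ?w) + d (?v, ?w)\<bar> \<le> 1"
    "\<bar>d (0, ?u) + d (0, ?w) + d (?u, ?v) + d (?v, ?w)\<bar> \<le> 1"
    "\<bar>d (0, ?v) + d (0, ?w) + d (?u, ?v) + d (?u, ?w)\<bar> \<le> 1"
    using leaf_bound[of "{?u, ?v}"] leaf_bound[of "{?u, ?w}"] leaf_bound[of "{?v, ?w}"]
    unfolding cut_values by simp_all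
  from assms(5) show ?thesis
    unfolding windmill_blade_def
    using K4_perturbation_le_half[OF zero_sums small_sums] by (elim insertE emptyE) simp_all
qed

lemma windmill_num_queries_ge:
  assumes correct: "\<forall>w. wgraph n w \<longrightarrow> run n T w = mincut n w"
    and n_eq: "n = 3 * k + 1" and "0 < k"
  shows "6 * k \<le> num_queries n T (windmill k)"
proof (rule ccontr)
  have n: "3 * k < n" using n_eq by simp
  let ?qs = "query_path n T (windmill k)"
  assume "\<not> ?thesis"
  then have "length ?qs < card (windmill_edges k)"
    by (simp add: length_query_path card_windmill_edges)
  from exists_normalized_orthogonal[OF finite_windmill_edges this]
  obtain d where d_supp: "\<forall>p. p \<notin> windmill_edges k \<longrightarrow> d p = 0"
    and d_bound: "\<forall>p. \<bar>d p\<bar> \<le> 1" and d_one: "\<exists>p\<in>windmill_edges k. d p = 1"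
    and d_orth: "\<forall>x\<in>set ?qs. (\<Sum>p\<in>windmill_edges k. x p * d p) = 0"
    by blast
  have perturbed_cuts: "3 \<le> cut_weight n (\<lambda>p. windmill k p + c * d p) X"
    if "c \<in> {1, -1}" "X \<noteq> {}" "X \<subset> {..<n}" for c X
  proof -
    have "\<forall>x\<in>set ?qs. lin_query n x (\<lambda>p. windmill k p + c * d p) = lin_query n x (windmill k)"
      using d_orth
      by (simp add: lin_query_add_scaled lin_query_eq_sum_support[OF windmill_edges_subset_Pairs[OF n] d_supp])
    moreover have "wgraph n (\<lambda>p. windmill k p + c * d p)"
      using that(1) by (intro wgraph_windmill_perturbed[OF n d_supp d_bound]) auto
    ultimately have "mincut n (\<lambda>p. windmill k p + c * d p) = mincut n (windmill k)"
      using mincut_eq_if_same_answers[OF correct wgraph_windmill[OF n]] by blast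
    then show ?thesis
      using mincut_windmill_ge_3[OF n_eq \<open>0 < k\<close>]
        mincut_le_cut_weight[OF that(2,3), of "\<lambda>p. windmill k p + c * d p"] by linarith
  qed
  obtain i p where i: "i < k" and p: "p \<in> windmill_blade i" and "d p = 1"
    using d_one unfolding windmill_edges_def by blast
  moreover have "\<bar>d p\<bar> \<le> 1/2"
    by (rule windmill_perturbation_le_half[OF n i d_supp perturbed_cuts p])
  ultimately show False by simp
qed

theorem theorem3:
  fixes k n :: nat and T :: qtree
  assumes "n = 3 * k + 1"
    and "\<forall>w. wgraph n w \<longrightarrow> run n T w = mincut n w"
  shows "\<exists>w. wgraph n w \<and> num_queries n T w \<ge> 2 * n - 2"
proof (cases "k = 0")
  case True
  then show ?thesis using assms(1) by (intro exI[of _ "\<lambda>_. 0"]) (simp add: wgraph_def)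
next
  case False
  then have "wgraph n (windmill k)" and "6 * k \<le> num_queries n T (windmill k)"
    using assms wgraph_windmill windmill_num_queries_ge by simp_all
  then show ?thesis using assms(1) by (intro exI[of _ "windmill k"]) simp
qed

end
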